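(* For every $\varepsilon>0$ there exists $n_0$ such that for every $n\ge n_0$ and every permutation $\pi\in S_n$, the sum of the induced densities in $\pi$ of the eight permutations $1234, 1243, 2134, 2143, 3412, 4312, 3421, 4321$ is at least $\frac13-\varepsilon$. That is, this sum is at least $\frac13+o(1)$ as $n\to\infty$.
   Context: For a permutation $\pi\in S_n$ (written as the word $\pi(1)\pi(2)\cdots\pi(n)$) and a permutation $\tau\in S_4$, the induced density of $\tau$ in $\pi$ is the fraction, among all $\binom n4$ sets of positions $i_1<i_2<i_3<i_4$, of those for which the sequence $\pi(i_1),\pi(i_2),\pi(i_3),\pi(i_4)$ is order-isomorphic to $\tau(1),\tau(2),\tau(3),\tau(4)$ (i.e. $\pi(i_s)<\pi(i_t)$ iff $\tau(s)<\tau(t)$). *)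

theory Defs
  imports "HOL-Combinatorics.Permutations" Complex_Main
begin

text \<open>A permutation \<pi> in S_n is a bijection of {1..n} (\<open>\<pi> permutes {1..n}\<close>);
  its word is \<pi>(1)\<pi>(2)...\<pi>(n). A pattern \<tau> in S_4 is given by its word as a list.\<close>

definition occurs_at :: "(nat \<Rightarrow> nat) \<Rightarrow> nat list \<Rightarrow> nat set \<Rightarrow> bool" where
  "occurs_at \<pi> \<tau> I \<longleftrightarrow>
     (let is = sorted_list_of_set I in
       \<forall>s < length \<tau>. \<forall>t < length \<tau>. (\<pi> (is ! s) < \<pi> (is ! t) \<longleftrightarrow> \<tau> ! s < \<tau> ! t))"

definition induced_density :: "nat list \<Rightarrow> nat \<Rightarrow> (nat \<Rightarrow> nat) \<Rightarrow> real" where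
  "induced_density \<tau> n \<pi> =
     real (card {I. I \<subseteq> {1..n} \<and> card I = length \<tau> \<and> occurs_at \<pi> \<tau> I})
     / real (n choose length \<tau>)"

definition patterns8 :: "nat list list" where
  "patterns8 = [[1,2,3,4],[1,2,4,3],[2,1,3,4],[2,1,4,3],[3,4,1,2],[4,3,1,2],[3,4,2,1],[4,3,2,1]]"

end

theory Submission
  imports Defs
begin

(*
  For positions p1 < p2 < p3 < p4 the eight patterns are exactly the order types in which
  the values of the left pair {p1, p2} lie all below or all above those of the right pair
  {p3, p4}. Counting such separated quadruples by the middle-left position i = p2 and the
  extreme value j of the left pair writes their number as a sum over the n x n cells (i, j)
  of a quantity that depends only on n, i, j, the corner count a(i-1, j-1) = #{k < i. \<pi> k < j}
  and three 0/1 indicators. For each of the five possible indicator patterns a polynomial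
  identity shows that this quantity is a square (measuring how far a(i, j) is from i j / n)
  plus the increments, in i and in j respectively, of two explicit potentials, up to an
  error O(n), and O(n^2) on the n cells with \<pi> i = j. Summing over all cells, the first
  potential telescopes to 0 and the second to \<Sum>i. i^2 (n - i) / 6 = n^2 (n^2 - 1) / 72,
  because a(n, j) = j, a(i, n) = i and a vanishes on the lower and left borders. As
  n^2 (n^2 - 1) / 72 = (1/3 + o(1)) (n choose 4), the total error O(n^3) is negligible.
*)

lemma real_card_filter_eq_sum: "finite A \<Longrightarrow> real (card {x\<in>A. P x}) = (\<Sum>x\<in>A. of_bool (P x))"
  by (simp add: Int_def)

lemma card_filter_add_card_filter_not:
  "finite A \<Longrightarrow> card {x\<in>A. P x} + card {x\<in>A. \<not> P x} = card A"
proof -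
  assume "finite A"
  moreover have "A = {x\<in>A. P x} \<union> {x\<in>A. \<not> P x}" by auto
  ultimately show ?thesis
    by (metis (no_types, lifting) card_Un_disjoint disjoint_iff finite_Un mem_Collect_eq)
qed

lemma sum_of_bool_less_pairs:
  fixes S :: "'a::linorder set"
  assumes "finite S"
  shows "(\<Sum>x\<in>S. \<Sum>y\<in>S. of_bool (x < y) :: real) = real (card S choose 2)"
  using assms
proof (induction rule: finite_induct)
  case empty
  then show ?case by simp
next
  case (insert a S)
  have "(\<Sum>x\<in>insert a S. \<Sum>y\<in>insert a S. of_bool (x < y) :: real)
      = (\<Sum>y\<in>S. of_bool (a < y)) + (\<Sum>x\<in>S. of_bool (x < a)) + (\<Sum>x\<in>S. \<Sum>y\<in>S. of_bool (x < y))"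
    using insert by (simp add: sum.insert sum.distrib del: sum_of_bool_eq)
  also have "(\<Sum>y\<in>S. of_bool (a < y) :: real) + (\<Sum>x\<in>S. of_bool (x < a)) = (\<Sum>y\<in>S. 1)"
    unfolding sum.distrib[symmetric]
    by (rule sum.cong[OF refl]) (use insert in \<open>auto simp: of_bool_def\<close>)
  finally show ?case
    using insert by (simp add: numeral_2_eq_2 del: sum_of_bool_eq)
qed

lemma sum_of_bool_less_pairs_subset:
  fixes S A :: "'a::linorder set"
  assumes "S \<subseteq> A" "finite A"
  shows "(\<Sum>x\<in>A. \<Sum>y\<in>A. of_bool (x < y \<and> x \<in> S \<and> y \<in> S) :: real) = real (card S choose 2)"
proof -
  have "(\<Sum>x\<in>A. \<Sum>y\<in>A. of_bool (x < y \<and> x \<in> S \<and> y \<in> S) :: real)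
      = (\<Sum>x\<in>A. of_bool (x \<in> S) * (\<Sum>y\<in>A. of_bool (y \<in> S) * of_bool (x < y)))"
    unfolding sum_distrib_left by (intro sum.cong refl) (simp add: of_bool_def)
  also have "\<dots> = (\<Sum>x\<in>S. \<Sum>y\<in>S. of_bool (x < y))"
    using assms by (simp add: Int_absorb1 Int_def[symmetric] del: sum_of_bool_eq)
  also have "\<dots> = real (card S choose 2)"
    using assms by (intro sum_of_bool_less_pairs) (rule finite_subset)
  finally show ?thesis .
qed

lemma sum_of_bool_mult_regroup:
  assumes "finite A" "finite B" "\<And>p. p \<in> A \<Longrightarrow> Q p \<Longrightarrow> h p \<in> B"
  shows "(\<Sum>p\<in>A. of_bool (Q p) * g (h p) :: real)
       = (\<Sum>j\<in>B. real (card {p\<in>A. Q p \<and> h p = j}) * g j)"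
proof -
  have "(\<Sum>j\<in>B. real (card {p\<in>A. Q p \<and> h p = j}) * g j)
      = (\<Sum>p\<in>A. \<Sum>j\<in>B. of_bool (Q p \<and> h p = j) * g j)"
    by (simp only: real_card_filter_eq_sum[OF assms(1)] sum_distrib_right sum.swap[of _ B])
  also have "\<dots> = (\<Sum>p\<in>A. of_bool (Q p) * g (h p))"
  proof (rule sum.cong[OF refl])
    fix p assume "p \<in> A"
    then have "Q p \<Longrightarrow> h p \<in> B" using assms(3) by blast
    moreover have "(\<Sum>j\<in>B. of_bool (Q p \<and> h p = j) * g j)
        = (\<Sum>j\<in>B. if h p = j then of_bool (Q p) * g j else 0)"
      by (rule sum.cong) auto
    ultimately show "(\<Sum>j\<in>B. of_bool (Q p \<and> h p = j) * g j) = of_bool (Q p) * g (h p)"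
      using assms(2) by (auto simp: sum.delta)
  qed
  finally show ?thesis by simp
qed

lemma sum_diff_pred_telescope:
  fixes f :: "nat \<Rightarrow> 'a::ab_group_add"
  shows "(\<Sum>i\<in>{1..m}. f i - f (i - 1)) = f m - f 0"
  by (induction m) (simp_all add: sum.cl_ivl_Suc)

lemma real_choose_two: "real (m choose 2) = real m * (real m - 1) / 2"
  by (induction m) (simp_all add: numeral_2_eq_2 field_simps)

lemma real_choose_three: "real (m choose 3) = real m * (real m - 1) * (real m - 2) / 6"
  by (induction m) (simp_all add: numeral_3_eq_3 real_choose_two[unfolded numeral_2_eq_2] field_simps)

lemma real_choose_four:
  "real (m choose 4) = real m * (real m - 1) * (real m - 2) * (real m - 3) / 24"
proof (induction m)
  case (Suc m)
  have "Suc m choose 4 = (m choose 3) + (m choose 4)"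
    by (simp add: numeral_eq_Suc)
  then show ?case using Suc by (simp add: real_choose_three field_simps)
qed simp

lemma sum_square_mult_gap:
  "(\<Sum>i\<in>{1..m}. real i ^ 2 * (x - real i)) = x * m * (m + 1) * (2 * m + 1) / 6 - m^2 * (m + 1)^2 / 4"
  by (induction m) (simp_all add: field_simps power2_eq_square)

definition four_subsets :: "nat \<Rightarrow> nat set set" where
  "four_subsets n = {I. I \<subseteq> {1..n} \<and> card I = 4}"

lemma finite_four_subsets: "finite (four_subsets n)"
  unfolding four_subsets_def by (rule finite_subset[of _ "Pow {1..n}"]) auto

lemma sorted_list_of_set_four:
  "p1 < p2 \<Longrightarrow> p2 < p3 \<Longrightarrow> p3 < p4 \<Longrightarrow> sorted_list_of_set {p1, p2, p3, p4} = [p1, p2, p3, p4::nat]"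
  by (rule sorted_distinct_set_unique) auto

lemma bij_betw_increasing_quadruples_four_subsets:
  "bij_betw (\<lambda>(p1, p2, p3, p4). {p1, p2, p3, p4::nat})
     {t \<in> {1..n} \<times> {1..n} \<times> {1..n} \<times> {1..n}. case t of (p1, p2, p3, p4) \<Rightarrow> p1 < p2 \<and> p2 < p3 \<and> p3 < p4}
     (four_subsets n)"
proof (rule bij_betwI', goal_cases inj into onto)
  case (inj x y)
  obtain a b c d a' b' c' d' where "x = (a, b, c, d)" "y = (a', b', c', d')"
    by (cases x, cases y) auto
  moreover have "{a, b, c, d} = {a', b', c', d'} \<Longrightarrow> [a, b, c, d] = [a', b', c', d']"
    using inj calculation by (metis (no_types, lifting) case_prod_conv mem_Collect_eq sorted_list_of_set_four)
  ultimately show ?case by auto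
next
  case (into x)
  then show ?case by (cases x) (auto simp: four_subsets_def)
next
  case (onto I)
  then have fin: "finite I" and card: "card I = 4" and sub: "I \<subseteq> {1..n}"
    unfolding four_subsets_def by (auto intro: finite_subset)
  have "\<exists>a b c d. xs = [a, b, c, d]" if "length xs = 4" for xs :: "nat list"
    using that by (auto simp: numeral_eq_Suc length_Suc_conv)
  then obtain a b c d where abcd: "sorted_list_of_set I = [a, b, c, d]"
    using card by (metis length_sorted_list_of_set)
  have "sorted [a, b, c, d]" "distinct [a, b, c, d]"
    by (metis abcd sorted_sorted_list_of_set distinct_sorted_list_of_set)+
  moreover have "I = {a, b, c, d}"
    by (metis fin abcd list.set set_sorted_list_of_set empty_set)
  ultimately show ?case
    using sub by (intro bexI[of _ "(a, b, c, d)"]) auto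
qed

lemma sum_four_subsets:
  "(\<Sum>I\<in>four_subsets n. g I :: real) =
     (\<Sum>p1\<in>{1..n}. \<Sum>p2\<in>{1..n}. \<Sum>p3\<in>{1..n}. \<Sum>p4\<in>{1..n}.
        of_bool (p1 < p2 \<and> p2 < p3 \<and> p3 < p4) * g {p1, p2, p3, p4})"
proof -
  let ?U = "{1..n} \<times> {1..n} \<times> {1..n} \<times> {1..n::nat}"
  let ?c = "\<lambda>t. case t of (p1, p2, p3, p4) \<Rightarrow> p1 < p2 \<and> p2 < p3 \<and> p3 < (p4::nat)"
  let ?f = "\<lambda>t. case t of (p1, p2, p3, p4) \<Rightarrow> {p1, p2, p3, p4::nat}"
  have "(\<Sum>I\<in>four_subsets n. g I) = (\<Sum>t\<in>{t\<in>?U. ?c t}. g (?f t))"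
    by (rule sum.reindex_bij_betw[OF bij_betw_increasing_quadruples_four_subsets, symmetric])
  also have "\<dots> = (\<Sum>t\<in>?U. if ?c t then g (?f t) else 0)"
    by (rule sum.inter_filter) simp
  also have "\<dots> = (\<Sum>t\<in>?U. of_bool (?c t) * g (?f t))"
    by (rule sum.cong) simp_all
  also have "\<dots> = (\<Sum>p1\<in>{1..n}. \<Sum>p2\<in>{1..n}. \<Sum>p3\<in>{1..n}. \<Sum>p4\<in>{1..n}.
      of_bool (p1 < p2 \<and> p2 < p3 \<and> p3 < p4) * g {p1, p2, p3, p4})"
    by (simp add: sum.cartesian_product del: sum_of_bool_mult_eq)
      (rule sum.cong, auto split: prod.splits)
  finally show ?thesis .
qed

definition order_isomorphic :: "nat list \<Rightarrow> nat list \<Rightarrow> bool" where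
  "order_isomorphic ys \<tau> \<longleftrightarrow>
     (\<forall>s < length \<tau>. \<forall>t < length \<tau>. (ys ! s < ys ! t \<longleftrightarrow> \<tau> ! s < \<tau> ! t))"

lemma order_isomorphic_four:
  "order_isomorphic [y1, y2, y3, y4] [a, b, c, d] \<longleftrightarrow>
     (y1 < y2) = (a < b) \<and> (y1 < y3) = (a < c) \<and> (y1 < y4) = (a < d) \<and>
     (y2 < y1) = (b < a) \<and> (y2 < y3) = (b < c) \<and> (y2 < y4) = (b < d) \<and>
     (y3 < y1) = (c < a) \<and> (y3 < y2) = (c < b) \<and> (y3 < y4) = (c < d) \<and>
     (y4 < y1) = (d < a) \<and> (y4 < y2) = (d < b) \<and> (y4 < y3) = (d < c)"
  unfolding order_isomorphic_def by (simp add: All_less_Suc numeral_eq_Suc) blast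

lemma occurs_at_iff_order_isomorphic:
  assumes "p1 < p2" "p2 < p3" "p3 < p4" "length \<tau> = 4"
  shows "occurs_at \<pi> \<tau> {p1, p2, p3, p4} \<longleftrightarrow> order_isomorphic [\<pi> p1, \<pi> p2, \<pi> p3, \<pi> p4] \<tau>"
proof -
  have "occurs_at \<pi> \<tau> (set ps) \<longleftrightarrow> order_isomorphic (map \<pi> ps) \<tau>"
    if "sorted_list_of_set (set ps) = ps" "length ps = length \<tau>" for ps
    using that by (simp add: occurs_at_def order_isomorphic_def)
  from this[of "[p1, p2, p3, p4]"] show ?thesis
    using assms by (simp add: sorted_list_of_set_four)
qed

lemma sum_patterns8_order_isomorphic:
  fixes y1 y2 y3 y4 :: nat
  assumes "distinct [y1, y2, y3, y4]"
  shows "(\<Sum>\<tau>\<leftarrow>patterns8. of_bool (order_isomorphic [y1, y2, y3, y4] \<tau>) :: real)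
     = of_bool (max y1 y2 < min y3 y4) + of_bool (max y3 y4 < min y1 y2)"
proof -
  have "y1 \<noteq> y2" "y3 \<noteq> y4" using assms by auto
  then consider "y1 < y2" "y3 < y4" | "y1 < y2" "y4 < y3" | "y2 < y1" "y3 < y4" | "y2 < y1" "y4 < y3"
    by (metis linorder_neq_iff)
  then show ?thesis
    by cases (simp_all add: patterns8_def order_isomorphic_four)
qed

lemma sum_list_induced_density:
  assumes "\<forall>\<tau>\<in>set L. length \<tau> = 4"
  shows "(\<Sum>\<tau>\<leftarrow>L. induced_density \<tau> n \<pi>)
     = (\<Sum>I\<in>four_subsets n. \<Sum>\<tau>\<leftarrow>L. of_bool (occurs_at \<pi> \<tau> I)) / real (n choose 4)"
  using assms
proof (induction L)
  case (Cons \<tau> L)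
  have "induced_density \<tau> n \<pi> = real (card {I\<in>four_subsets n. occurs_at \<pi> \<tau> I}) / real (n choose 4)"
    using Cons.prems unfolding induced_density_def four_subsets_def by (simp add: conj_assoc)
  also have "\<dots> = (\<Sum>I\<in>four_subsets n. of_bool (occurs_at \<pi> \<tau> I)) / real (n choose 4)"
    by (simp only: real_card_filter_eq_sum[OF finite_four_subsets])
  finally show ?case
    using Cons by (simp add: sum.distrib add_divide_distrib del: sum_of_bool_eq)
qed simp

definition corner_count :: "(nat \<Rightarrow> nat) \<Rightarrow> nat \<Rightarrow> nat \<Rightarrow> nat" where
  "corner_count \<pi> i j = card {k \<in> {1..i}. \<pi> k \<le> j}"

definition value_count :: "(nat \<Rightarrow> nat) \<Rightarrow> nat \<Rightarrow> nat \<Rightarrow> nat" where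
  "value_count \<pi> i j = card {k \<in> {1..i}. \<pi> k = j}"

lemma corner_count_zero_left [simp]: "corner_count \<pi> 0 j = 0"
  by (simp add: corner_count_def)

lemma corner_count_le: "corner_count \<pi> i j \<le> i"
  unfolding corner_count_def by (rule order.trans[OF card_mono[of "{1..i}"]]) auto

lemma corner_count_step_left:
  assumes "1 \<le> i"
  shows "corner_count \<pi> i j = corner_count \<pi> (i - 1) j + (if \<pi> i \<le> j then 1 else 0)"
proof -
  have "{k \<in> {1..i}. \<pi> k \<le> j} = {k \<in> {1..i - 1}. \<pi> k \<le> j} \<union> (if \<pi> i \<le> j then {i} else {})"
  proof (rule set_eqI)
    fix x
    show "x \<in> {k \<in> {1..i}. \<pi> k \<le> j} \<longleftrightarrow>
        x \<in> {k \<in> {1..i - 1}. \<pi> k \<le> j} \<union> (if \<pi> i \<le> j then {i} else {})"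
      using assms by (cases "x = i") auto
  qed
  then show ?thesis
    unfolding corner_count_def using assms by (simp add: card_insert_if)
qed

lemma corner_count_step_value:
  assumes "1 \<le> j"
  shows "corner_count \<pi> i j = corner_count \<pi> i (j - 1) + value_count \<pi> i j"
proof -
  have "{k \<in> {1..i}. \<pi> k \<le> j} = {k \<in> {1..i}. \<pi> k \<le> j - 1} \<union> {k \<in> {1..i}. \<pi> k = j}"
    using assms by auto
  moreover have "{k \<in> {1..i}. \<pi> k \<le> j - 1} \<inter> {k \<in> {1..i}. \<pi> k = j} = {}"
    using assms by auto
  ultimately show ?thesis
    unfolding corner_count_def value_count_def by (simp add: card_Un_disjoint)
qed

lemma value_count_step_left:
  assumes "1 \<le> i"
  shows "value_count \<pi> i j = value_count \<pi> (i - 1) j + (if \<pi> i = j then 1 else 0)"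
proof -
  have "{k \<in> {1..i}. \<pi> k = j} = {k \<in> {1..i - 1}. \<pi> k = j} \<union> (if \<pi> i = j then {i} else {})"
  proof (rule set_eqI)
    fix x
    show "x \<in> {k \<in> {1..i}. \<pi> k = j} \<longleftrightarrow>
        x \<in> {k \<in> {1..i - 1}. \<pi> k = j} \<union> (if \<pi> i = j then {i} else {})"
      using assms by (cases "x = i") auto
  qed
  then show ?thesis
    unfolding value_count_def using assms by (simp add: card_insert_if)
qed

lemma value_count_le_one: "inj \<pi> \<Longrightarrow> value_count \<pi> i j \<le> 1"
  unfolding value_count_def
  by (rule order.trans[OF card_mono[of "{inv \<pi> j}"]]) (auto simp: inv_f_f)

lemma value_count_before_self: "inj \<pi> \<Longrightarrow> 1 \<le> i \<Longrightarrow> value_count \<pi> (i - 1) (\<pi> i) = 0"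
  unfolding value_count_def by (auto simp: inj_eq)

context
  fixes \<pi> :: "nat \<Rightarrow> nat" and n :: nat
  assumes perm: "\<pi> permutes {1..n}"
begin

lemma permutes_value_ge_one: "1 \<le> k \<Longrightarrow> 1 \<le> \<pi> k"
proof (cases "k \<le> n")
  case True
  then show "1 \<le> k \<Longrightarrow> 1 \<le> \<pi> k"
    using permutes_in_image[OF perm, of k] by auto
next
  case False
  then show "1 \<le> k \<Longrightarrow> 1 \<le> \<pi> k"
    using permutes_not_in[OF perm, of k] by auto
qed

lemma corner_count_zero_value [simp]: "corner_count \<pi> i 0 = 0"
proof -
  have "{k \<in> {1..i}. \<pi> k \<le> 0} = {}"
    using permutes_value_ge_one by fastforce
  then show ?thesis by (simp add: corner_count_def)
qed

lemma corner_count_full_left: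
  assumes "j \<le> n"
  shows "corner_count \<pi> n j = j"
proof -
  have "\<pi> ` {k \<in> {1..n}. \<pi> k \<le> j} = {1..j}"
  proof
    show "\<pi> ` {k \<in> {1..n}. \<pi> k \<le> j} \<subseteq> {1..j}"
      using permutes_value_ge_one by auto
    show "{1..j} \<subseteq> \<pi> ` {k \<in> {1..n}. \<pi> k \<le> j}"
    proof
      fix y assume y: "y \<in> {1..j}"
      then have "y \<in> \<pi> ` {1..n}"
        using permutes_image[OF perm] assms by auto
      then show "y \<in> \<pi> ` {k \<in> {1..n}. \<pi> k \<le> j}"
        using y by auto
    qed
  qed
  moreover have "inj_on \<pi> {k \<in> {1..n}. \<pi> k \<le> j}"
    using permutes_inj[OF perm] by (auto simp: inj_on_def inj_def)
  ultimately show ?thesis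
    unfolding corner_count_def by (metis card_atLeastAtMost card_image diff_Suc_1)
qed

lemma corner_count_full_value:
  assumes "i \<le> n"
  shows "corner_count \<pi> i n = i"
proof -
  have "{k \<in> {1..i}. \<pi> k \<le> n} = {1..i}"
    using permutes_in_image[OF perm] assms by fastforce
  then show ?thesis by (simp add: corner_count_def)
qed

lemma card_later_above:
  assumes "i \<le> n" "j \<le> n"
  shows "real (card {k\<in>{1..n}. i < k \<and> j < \<pi> k}) = real n - real i - real j + real (corner_count \<pi> i j)"
proof -
  have "{k\<in>{1..n}. \<not> \<pi> k \<le> j} = {k\<in>{1..i}. \<not> \<pi> k \<le> j} \<union> {k\<in>{1..n}. i < k \<and> j < \<pi> k}"
    using assms by auto
  then have "card {k\<in>{1..n}. \<not> \<pi> k \<le> j}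
      = card {k\<in>{1..i}. \<not> \<pi> k \<le> j} + card {k\<in>{1..n}. i < k \<and> j < \<pi> k}"
    by (simp add: card_Un_disjoint disjoint_iff)
  moreover have "card {k\<in>{1..n}. \<pi> k \<le> j} = j"
    using corner_count_full_left[OF assms(2)] by (simp add: corner_count_def)
  ultimately show ?thesis
    using card_filter_add_card_filter_not[of "{1..n}" "\<lambda>k. \<pi> k \<le> j"]
      card_filter_add_card_filter_not[of "{1..i}" "\<lambda>k. \<pi> k \<le> j"]
    unfolding corner_count_def by simp
qed

lemma card_later_below:
  assumes "i \<le> n" "1 \<le> j" "j \<le> n"
  shows "real (card {k\<in>{1..n}. i < k \<and> \<pi> k < j}) = real j - 1 - real (corner_count \<pi> i (j - 1))"
proof -
  have "{k\<in>{1..n}. \<pi> k \<le> j - 1} = {k\<in>{1..i}. \<pi> k \<le> j - 1} \<union> {k\<in>{1..n}. i < k \<and> \<pi> k < j}"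
    using assms by auto
  then have "card {k\<in>{1..n}. \<pi> k \<le> j - 1}
      = card {k\<in>{1..i}. \<pi> k \<le> j - 1} + card {k\<in>{1..n}. i < k \<and> \<pi> k < j}"
    by (simp add: card_Un_disjoint disjoint_iff)
  moreover have "card {k\<in>{1..n}. \<pi> k \<le> j - 1} = j - 1"
    using corner_count_full_left[of "j - 1"] assms by (simp add: corner_count_def)
  ultimately show ?thesis
    using assms unfolding corner_count_def by (simp add: of_nat_diff)
qed

lemma card_earlier_max:
  assumes "1 \<le> i" "i \<le> n"
  shows "card {p\<in>{1..n}. p < i \<and> max (\<pi> p) (\<pi> i) = j} =
     (if \<pi> i = j then corner_count \<pi> (i - 1) (j - 1) else 0) +
     (if \<pi> i < j then value_count \<pi> (i - 1) j else 0)"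
proof -
  consider "\<pi> i = j" | "\<pi> i < j" | "j < \<pi> i" by linarith
  then show ?thesis
  proof cases
    case 1
    have "{p\<in>{1..n}. p < i \<and> max (\<pi> p) (\<pi> i) = j} = {k\<in>{1..i - 1}. \<pi> k \<le> j - 1}"
    proof (rule set_eqI)
      fix p
      have "p < i \<Longrightarrow> \<pi> p \<noteq> \<pi> i"
        using permutes_inj[OF perm] by (auto simp: inj_eq)
      then show "p \<in> {p\<in>{1..n}. p < i \<and> max (\<pi> p) (\<pi> i) = j} \<longleftrightarrow> p \<in> {k\<in>{1..i - 1}. \<pi> k \<le> j - 1}"
        using 1 assms by (auto simp: max_def)
    qed
    then show ?thesis using 1 by (simp add: corner_count_def)
  next
    case 2
    then have "{p\<in>{1..n}. p < i \<and> max (\<pi> p) (\<pi> i) = j} = {k\<in>{1..i - 1}. \<pi> k = j}"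
      using assms by (auto simp: max_def)
    then show ?thesis using 2 by (simp add: value_count_def)
  qed (auto simp: max_def)
qed

lemma card_earlier_min:
  assumes "1 \<le> i" "i \<le> n"
  shows "card {p\<in>{1..n}. p < i \<and> min (\<pi> p) (\<pi> i) = j} =
     (if \<pi> i = j then (i - 1) - corner_count \<pi> (i - 1) j else 0) +
     (if j < \<pi> i then value_count \<pi> (i - 1) j else 0)"
proof -
  consider "\<pi> i = j" | "j < \<pi> i" | "\<pi> i < j" by linarith
  then show ?thesis
  proof cases
    case 1
    have "{p\<in>{1..n}. p < i \<and> min (\<pi> p) (\<pi> i) = j} = {k\<in>{1..i - 1}. \<not> \<pi> k \<le> j}"
    proof (rule set_eqI)
      fix p
      have "p < i \<Longrightarrow> \<pi> p \<noteq> \<pi> i"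
        using permutes_inj[OF perm] by (auto simp: inj_eq)
      then show "p \<in> {p\<in>{1..n}. p < i \<and> min (\<pi> p) (\<pi> i) = j} \<longleftrightarrow> p \<in> {k\<in>{1..i - 1}. \<not> \<pi> k \<le> j}"
        using 1 assms by (auto simp: min_def)
    qed
    then show ?thesis
      using 1 card_filter_add_card_filter_not[of "{1..i - 1}" "\<lambda>k. \<pi> k \<le> j"]
      by (simp add: corner_count_def)
  next
    case 2
    then have "{p\<in>{1..n}. p < i \<and> min (\<pi> p) (\<pi> i) = j} = {k\<in>{1..i - 1}. \<pi> k = j}"
      using assms by (auto simp: min_def)
    then show ?thesis using 2 by (simp add: value_count_def)
  qed (auto simp: min_def)
qed

end

text \<open>Separated quadruples p1 < i < p3 < p4 in which the left pair {p1, i} has extreme value j: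
  its maximum if it lies below the right pair, its minimum if it lies above.\<close>

definition cell_count :: "(nat \<Rightarrow> nat) \<Rightarrow> nat \<Rightarrow> nat \<Rightarrow> nat \<Rightarrow> real" where
  "cell_count \<pi> n i j =
     real (card {p\<in>{1..n}. p < i \<and> max (\<pi> p) (\<pi> i) = j}) * real (card {k\<in>{1..n}. i < k \<and> j < \<pi> k} choose 2)
   + real (card {p\<in>{1..n}. p < i \<and> min (\<pi> p) (\<pi> i) = j}) * real (card {k\<in>{1..n}. i < k \<and> \<pi> k < j} choose 2)"

lemma sum_triples_by_value:
  fixes m :: "nat \<Rightarrow> nat" and R :: "nat \<Rightarrow> nat \<Rightarrow> bool"
  assumes "\<And>p. p \<in> {1..n} \<Longrightarrow> p < i \<Longrightarrow> m p \<in> {1..n}"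
  shows "(\<Sum>p1\<in>{1..n}. \<Sum>p3\<in>{1..n}. \<Sum>p4\<in>{1..n}.
            of_bool (p1 < i \<and> i < p3 \<and> p3 < p4 \<and> R (m p1) p3 \<and> R (m p1) p4) :: real)
       = (\<Sum>j\<in>{1..n}. real (card {p\<in>{1..n}. p < i \<and> m p = j}) *
                         real (card {k\<in>{1..n}. i < k \<and> R j k} choose 2))"
proof -
  define g where "g j = real (card {k\<in>{1..n}. i < k \<and> R j k} choose 2)" for j
  have "(\<Sum>p3\<in>{1..n}. \<Sum>p4\<in>{1..n}.
          of_bool (p1 < i \<and> i < p3 \<and> p3 < p4 \<and> R (m p1) p3 \<and> R (m p1) p4) :: real)
      = of_bool (p1 < i) * g (m p1)" for p1
  proof -
    let ?S = "{k\<in>{1..n}. i < k \<and> R (m p1) k}"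
    have "(\<Sum>p3\<in>{1..n}. \<Sum>p4\<in>{1..n}.
            of_bool (p1 < i \<and> i < p3 \<and> p3 < p4 \<and> R (m p1) p3 \<and> R (m p1) p4) :: real)
        = of_bool (p1 < i) * (\<Sum>p3\<in>{1..n}. \<Sum>p4\<in>{1..n}. of_bool (p3 < p4 \<and> p3 \<in> ?S \<and> p4 \<in> ?S))"
      unfolding sum_distrib_left by (intro sum.cong refl) auto
    also have "\<dots> = of_bool (p1 < i) * g (m p1)"
      unfolding g_def by (subst sum_of_bool_less_pairs_subset) auto
    finally show ?thesis .
  qed
  then have "(\<Sum>p1\<in>{1..n}. \<Sum>p3\<in>{1..n}. \<Sum>p4\<in>{1..n}.
            of_bool (p1 < i \<and> i < p3 \<and> p3 < p4 \<and> R (m p1) p3 \<and> R (m p1) p4) :: real)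
      = (\<Sum>p1\<in>{1..n}. of_bool (p1 < i) * g (m p1))"
    by simp
  also have "\<dots> = (\<Sum>j\<in>{1..n}. real (card {p\<in>{1..n}. p < i \<and> m p = j}) * g j)"
    by (rule sum_of_bool_mult_regroup) (use assms in auto)
  finally show ?thesis unfolding g_def .
qed

context
  fixes \<pi> :: "nat \<Rightarrow> nat" and n :: nat
  assumes perm: "\<pi> permutes {1..n}"
begin

lemma occurrences_patterns8_at_quadruple:
  "of_bool (p1 < p2 \<and> p2 < p3 \<and> p3 < p4) *
     (\<Sum>\<tau>\<leftarrow>patterns8. of_bool (occurs_at \<pi> \<tau> {p1, p2, p3, p4}) :: real)
   = of_bool (p1 < p2 \<and> p2 < p3 \<and> p3 < p4 \<and> max (\<pi> p1) (\<pi> p2) < min (\<pi> p3) (\<pi> p4))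
     + of_bool (p1 < p2 \<and> p2 < p3 \<and> p3 < p4 \<and> max (\<pi> p3) (\<pi> p4) < min (\<pi> p1) (\<pi> p2))"
proof (cases "p1 < p2 \<and> p2 < p3 \<and> p3 < p4")
  case True
  then have "(\<Sum>\<tau>\<leftarrow>patterns8. of_bool (occurs_at \<pi> \<tau> {p1, p2, p3, p4}) :: real)
      = (\<Sum>\<tau>\<leftarrow>patterns8. of_bool (order_isomorphic [\<pi> p1, \<pi> p2, \<pi> p3, \<pi> p4] \<tau>))"
    using occurs_at_iff_order_isomorphic by (simp add: patterns8_def)
  also have "\<dots> = of_bool (max (\<pi> p1) (\<pi> p2) < min (\<pi> p3) (\<pi> p4)) +
      of_bool (max (\<pi> p3) (\<pi> p4) < min (\<pi> p1) (\<pi> p2))"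
    using True permutes_inj[OF perm]
    by (intro sum_patterns8_order_isomorphic) (auto simp: inj_eq)
  finally show ?thesis
    using True by simp
next
  case False
  then have "\<And>P. (p1 < p2 \<and> p2 < p3 \<and> p3 < p4 \<and> P) \<longleftrightarrow> False" by blast
  with False show ?thesis by (simp only: of_bool_eq mult_zero_left add_0)
qed

lemma sum_low_triples_at:
  assumes "i \<in> {1..n}"
  shows "(\<Sum>p1\<in>{1..n}. \<Sum>p3\<in>{1..n}. \<Sum>p4\<in>{1..n}.
           of_bool (p1 < i \<and> i < p3 \<and> p3 < p4 \<and> max (\<pi> p1) (\<pi> i) < min (\<pi> p3) (\<pi> p4)) :: real)
       = (\<Sum>j\<in>{1..n}. real (card {p\<in>{1..n}. p < i \<and> max (\<pi> p) (\<pi> i) = j}) *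
                         real (card {k\<in>{1..n}. i < k \<and> j < \<pi> k} choose 2))"
proof -
  have "max (\<pi> p) (\<pi> i) \<in> {1..n}" if "p \<in> {1..n}" for p
    using that assms permutes_in_image[OF perm] by (auto simp: max_def)
  from sum_triples_by_value[where m = "\<lambda>p. max (\<pi> p) (\<pi> i)" and R = "\<lambda>j k. j < \<pi> k", OF this]
  show ?thesis by (simp only: min_less_iff_conj)
qed

lemma sum_high_triples_at:
  assumes "i \<in> {1..n}"
  shows "(\<Sum>p1\<in>{1..n}. \<Sum>p3\<in>{1..n}. \<Sum>p4\<in>{1..n}.
           of_bool (p1 < i \<and> i < p3 \<and> p3 < p4 \<and> max (\<pi> p3) (\<pi> p4) < min (\<pi> p1) (\<pi> i)) :: real)
       = (\<Sum>j\<in>{1..n}. real (card {p\<in>{1..n}. p < i \<and> min (\<pi> p) (\<pi> i) = j}) *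
                         real (card {k\<in>{1..n}. i < k \<and> \<pi> k < j} choose 2))"
proof -
  have "min (\<pi> p) (\<pi> i) \<in> {1..n}" if "p \<in> {1..n}" for p
    using that assms permutes_in_image[OF perm] by (auto simp: min_def)
  from sum_triples_by_value[where m = "\<lambda>p. min (\<pi> p) (\<pi> i)" and R = "\<lambda>j k. \<pi> k < j", OF this]
  show ?thesis by (simp only: max_less_iff_conj)
qed

lemma sum_occurrences_patterns8_eq_sum_cell_count:
  "(\<Sum>I\<in>four_subsets n. \<Sum>\<tau>\<leftarrow>patterns8. of_bool (occurs_at \<pi> \<tau> I))
     = (\<Sum>i\<in>{1..n}. \<Sum>j\<in>{1..n}. cell_count \<pi> n i j)"
proof -
  let ?low = "\<lambda>p1 p2 p3 p4. of_bool (p1 < p2 \<and> p2 < p3 \<and> p3 < p4 \<and>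
                 max (\<pi> p1) (\<pi> p2) < min (\<pi> p3) (\<pi> p4)) :: real"
  let ?high = "\<lambda>p1 p2 p3 p4. of_bool (p1 < p2 \<and> p2 < p3 \<and> p3 < p4 \<and>
                 max (\<pi> p3) (\<pi> p4) < min (\<pi> p1) (\<pi> p2)) :: real"
  have "(\<Sum>I\<in>four_subsets n. \<Sum>\<tau>\<leftarrow>patterns8. of_bool (occurs_at \<pi> \<tau> I))
      = (\<Sum>p1\<in>{1..n}. \<Sum>i\<in>{1..n}. \<Sum>p3\<in>{1..n}. \<Sum>p4\<in>{1..n}. ?low p1 i p3 p4) +
        (\<Sum>p1\<in>{1..n}. \<Sum>i\<in>{1..n}. \<Sum>p3\<in>{1..n}. \<Sum>p4\<in>{1..n}. ?high p1 i p3 p4)"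
    by (simp only: sum_four_subsets occurrences_patterns8_at_quadruple sum.distrib)
  also have "\<dots> = (\<Sum>i\<in>{1..n}. \<Sum>p1\<in>{1..n}. \<Sum>p3\<in>{1..n}. \<Sum>p4\<in>{1..n}. ?low p1 i p3 p4) +
      (\<Sum>i\<in>{1..n}. \<Sum>p1\<in>{1..n}. \<Sum>p3\<in>{1..n}. \<Sum>p4\<in>{1..n}. ?high p1 i p3 p4)"
    by (intro arg_cong2[where f = "(+)"] sum.swap)
  also have "\<dots> = (\<Sum>i\<in>{1..n}. (\<Sum>p1\<in>{1..n}. \<Sum>p3\<in>{1..n}. \<Sum>p4\<in>{1..n}. ?low p1 i p3 p4) +
      (\<Sum>p1\<in>{1..n}. \<Sum>p3\<in>{1..n}. \<Sum>p4\<in>{1..n}. ?high p1 i p3 p4))"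
    by (simp only: sum.distrib)
  also have "\<dots> = (\<Sum>i\<in>{1..n}. \<Sum>j\<in>{1..n}. cell_count \<pi> n i j)"
    by (intro sum.cong refl) (simp only: sum_low_triples_at sum_high_triples_at cell_count_def sum.distrib)
  finally show ?thesis .
qed

end

definition pairs_of :: "real \<Rightarrow> real" where
  "pairs_of x = x * (x - 1) / 2"

text \<open>The cell count in terms of A = a(i - 1, j - 1), u = [\<pi> i < j], v = [inv \<pi> j < i] and
  e = [\<pi> i = j], where a is the corner count.\<close>

definition cell_poly :: "real \<Rightarrow> real \<Rightarrow> real \<Rightarrow> real \<Rightarrow> real \<Rightarrow> real \<Rightarrow> real \<Rightarrow> real" where
  "cell_poly n i j A u v e =
     (e * A + u * v) * pairs_of (n - i - j + A + u + v + e) +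
     (e * (i - 1 - A - v) + (1 - u - e) * v) * pairs_of (j - 1 - A - u)"

definition row_potential :: "real \<Rightarrow> real \<Rightarrow> real \<Rightarrow> real \<Rightarrow> real" where
  "row_potential n i j a = n^2 * a / 2 + n * a^2 / 2 - n * j * a - n * i * a - i * a^2 / 2
     + i * j * a + i * j^2 / 2 + i^2 * a / 2 - i^2 * j^2 / (2 * n)"

definition col_potential :: "real \<Rightarrow> real \<Rightarrow> real \<Rightarrow> real \<Rightarrow> real" where
  "col_potential n i j a = n * a^2 / 2 + a^3 / 3 - j * a^2 - i * a^2 / 2 + i * j^2 * a / n - i^2 * j^3 / (3 * n^2)"

text \<open>The increment of the potentials across the cell (i, j), where
  a(i, j) = A + u + v + e, a(i - 1, j) = A + v and a(i, j - 1) = A + u.\<close>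

definition potential_step :: "real \<Rightarrow> real \<Rightarrow> real \<Rightarrow> real \<Rightarrow> real \<Rightarrow> real \<Rightarrow> real \<Rightarrow> real" where
  "potential_step n i j A u v e =
     (v + e) * row_potential n i j (A + u + v + e) - v * row_potential n (i - 1) j (A + v)
     + (col_potential n i j (A + u + v + e) - col_potential n i (j - 1) (A + u))"

definition cell_square :: "real \<Rightarrow> real \<Rightarrow> real \<Rightarrow> real \<Rightarrow> real \<Rightarrow> real \<Rightarrow> real \<Rightarrow> real" where
  "cell_square n i j A u v e =
     (n * (A + u + v + e) - i * j)^2 / n^2 + e * (n * (A + u + v + e) - i * j)^2 / (2 * n)"

lemma cell_square_nonneg: "0 < n \<Longrightarrow> 0 \<le> e \<Longrightarrow> 0 \<le> cell_square n i j A u v e"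
  unfolding cell_square_def by simp

lemma cell_excess:
  assumes "n \<noteq> 0"
  shows "cell_poly n i j A 0 0 0 - cell_square n i j A 0 0 0 - potential_step n i j A 0 0 0
           = i * A / n - i^2 * j / n^2 + i^2 / (3 * n^2)"
    and "cell_poly n i j A 1 0 0 - cell_square n i j A 1 0 0 - potential_step n i j A 1 0 0
           = i * A / n - i^2 * j / n^2 + i / n + i^2 / (3 * n^2)"
    and "cell_poly n i j A 0 1 0 - cell_square n i j A 0 1 0 - potential_step n i j A 0 1 0
           = i * A / n - i^2 * j / n^2 + 2 * i * j / n - j^2 / (2 * n) + i^2 / (3 * n^2)
             + n / 2 - 3 * j / 2 - i / 2 + 2 / 3"
    and "cell_poly n i j A 1 1 0 - cell_square n i j A 1 1 0 - potential_step n i j A 1 1 0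
           = i * A / n - i^2 * j / n^2 + 2 * i * j / n - j^2 / (2 * n) + i / n + i^2 / (3 * n^2)
             + j / 2 - n / 2 + i / 2 - 2 * A - 10 / 3"
    and "cell_poly n i j A 0 0 1 - cell_square n i j A 0 0 1 - potential_step n i j A 0 0 1
           = i * A / n - i^2 * j / n^2 + 2 * i * j / n - i * j^2 / n + i^2 / (3 * n^2)
             + 3 * i * A + 4 * j * A + n * i + n * j + 2 * i + 5 * j / 2
             - 5 * n * A / 2 - 5 * A^2 / 2 - 3 * i * j / 2 - j^2 / 2 - n^2 / 2 - i^2 / 2
             - 11 * A / 2 - 3 * n / 2 - 7 / 3"
  using assms
  unfolding cell_poly_def cell_square_def potential_step_def row_potential_def col_potential_def pairs_of_def
  by (simp_all add: field_simps power2_eq_square power3_eq_cube)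

lemma cell_excess_lower_bound:
  fixes n i j A u v e :: real
  assumes n: "1 \<le> n" and "1 \<le> i" "i \<le> n" "1 \<le> j" "j \<le> n" "0 \<le> A" "A \<le> n"
    and shape: "(u, v, e) \<in> {(0, 0, 0), (1, 0, 0), (0, 1, 0), (1, 1, 0), (0, 0, 1)}"
  shows "cell_poly n i j A u v e - cell_square n i j A u v e - potential_step n i j A u v e
           \<ge> - (10 * n + 30 * n^2 * e)"
proof -
  have n0: "n \<noteq> 0" "0 < n" using n by auto
  have products: "i * A \<le> n * n" "i * j \<le> n * n" "j * A \<le> n * n" "n * A \<le> n * n" "A * A \<le> n * n"
      "j * j \<le> n * n" "i * i \<le> n * n" "n \<le> n * n"
    using assms by (auto intro: mult_mono)
  have "i * i * j \<le> n * n * n" "i * (j * j) \<le> n * (n * n)"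
    using assms products by (auto intro: mult_mono)
  then have quotients: "i^2 * j / n^2 \<le> n" "j^2 / n \<le> n" "i * j^2 / n \<le> n^2" "i * j / n \<le> n"
      "i * A / n \<le> n" "i / n \<le> 1" "i^2 / n^2 \<le> 1"
    using products n0 assms
    by (simp_all add: pos_divide_le_eq power2_eq_square mult.assoc)
  have nonneg: "0 \<le> i * A / n" "0 \<le> i * j / n" "0 \<le> i / n" "0 \<le> i^2 / n^2" "0 \<le> i * A" "0 \<le> j * A"
      "0 \<le> n * i" "0 \<le> n * j"
    using assms by auto
  note bounds = products quotients nonneg
  from shape show ?thesis
    using cell_excess[OF n0(1), of i j A] bounds assms
    by (auto simp only: insert_iff prod.inject empty_iff power2_eq_square; linarith)
qed

definition row_potential_at :: "(nat \<Rightarrow> nat) \<Rightarrow> nat \<Rightarrow> nat \<Rightarrow> nat \<Rightarrow> real" where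
  "row_potential_at \<pi> n i j = real (value_count \<pi> i j) * row_potential n i j (corner_count \<pi> i j)"

definition col_potential_at :: "(nat \<Rightarrow> nat) \<Rightarrow> nat \<Rightarrow> nat \<Rightarrow> nat \<Rightarrow> real" where
  "col_potential_at \<pi> n i j = col_potential n i j (corner_count \<pi> i j)"

context
  fixes \<pi> :: "nat \<Rightarrow> nat" and n :: nat
  assumes perm: "\<pi> permutes {1..n}"
begin

lemma cell_count_as_cell_poly:
  assumes i: "1 \<le> i" "i \<le> n" and j: "1 \<le> j" "j \<le> n"
  defines "A \<equiv> real (corner_count \<pi> (i - 1) (j - 1))" and "u \<equiv> of_bool (\<pi> i < j)"
    and "v \<equiv> real (value_count \<pi> (i - 1) j)" and "e \<equiv> of_bool (\<pi> i = j)"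
  shows "cell_count \<pi> n i j = cell_poly n i j A u v e" (is ?cell)
    and "potential_step n i j A u v e =
           row_potential_at \<pi> n i j - row_potential_at \<pi> n (i - 1) j
           + (col_potential_at \<pi> n i j - col_potential_at \<pi> n i (j - 1))" (is ?step)
    and "(u, v, e) \<in> {(0, 0, 0), (1, 0, 0), (0, 1, 0), (1, 1, 0), (0, 0, 1)}" (is ?shape)
proof -
  note steps = corner_count_step_left[OF i(1), of \<pi> j] corner_count_step_value[OF j(1), of \<pi> "i - 1"]
    corner_count_step_left[OF i(1), of \<pi> "j - 1"] value_count_step_left[OF i(1), of \<pi> j]
  have le: "corner_count \<pi> (i - 1) j \<le> i - 1"
    by (rule corner_count_le)
  have v01: "value_count \<pi> (i - 1) j = 0 \<or> value_count \<pi> (i - 1) j = 1"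
    using value_count_le_one[OF permutes_inj[OF perm], of "i - 1" j] by auto
  have v_self: "\<pi> i = j \<Longrightarrow> value_count \<pi> (i - 1) j = 0"
    using value_count_before_self[OF permutes_inj[OF perm] i(1)] by simp
  have pairs: "real (m choose 2) = pairs_of (real m)" for m
    by (simp add: real_choose_two pairs_of_def)
  have ij: "real (i - 1) = real i - 1" "real (j - 1) = real j - 1"
    using i j by auto
  note defs = cell_count_def cell_poly_def potential_step_def row_potential_at_def
    col_potential_at_def A_def u_def v_def e_def
  note counts = card_earlier_max[OF perm i] card_earlier_min[OF perm i]
    card_later_above[OF perm i(2) j(2)] card_later_below[OF perm i(2) j]
  consider (below) "\<pi> i < j" | (diag) "\<pi> i = j" | (above) "j < \<pi> i" by linarith
  then have "?cell \<and> ?step \<and> ?shape"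
  proof cases
    case below
    then have "\<pi> i \<le> j" "\<pi> i \<le> j - 1" "\<pi> i \<noteq> j" "\<not> j < \<pi> i" by auto
    with v01 show ?thesis
      unfolding defs counts pairs using below steps ij by (auto simp: algebra_simps)
  next
    case diag
    then have "\<pi> i \<le> j" "\<not> \<pi> i \<le> j - 1" "\<not> \<pi> i < j" "\<not> j < \<pi> i" using j by auto
    with v_self show ?thesis
      unfolding defs counts pairs using diag steps ij le by (auto simp: algebra_simps of_nat_diff)
  next
    case above
    then have "\<not> \<pi> i \<le> j" "\<not> \<pi> i \<le> j - 1" "\<pi> i \<noteq> j" "\<not> \<pi> i < j" by auto
    with v01 show ?thesis
      unfolding defs counts pairs using above steps ij by (auto simp: algebra_simps)
  qed
  then show ?cell ?step ?shape
    by blast+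
qed

end

lemma row_potential_full: "n \<noteq> 0 \<Longrightarrow> row_potential n n j j = 0"
  unfolding row_potential_def by (simp add: field_simps power2_eq_square)

lemma col_potential_full: "n \<noteq> 0 \<Longrightarrow> col_potential n i n i = i^2 * (n - i) / 6"
  unfolding col_potential_def by (simp add: field_simps power2_eq_square power3_eq_cube)

lemma col_potential_zero: "col_potential n i 0 0 = 0"
  unfolding col_potential_def by simp

context
  fixes \<pi> :: "nat \<Rightarrow> nat" and n :: nat
  assumes perm: "\<pi> permutes {1..n}"
begin

lemma cell_count_ge_potential_increments:
  assumes i: "1 \<le> i" "i \<le> n" and j: "1 \<le> j" "j \<le> n"
  shows "row_potential_at \<pi> n i j - row_potential_at \<pi> n (i - 1) j
         + (col_potential_at \<pi> n i j - col_potential_at \<pi> n i (j - 1))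
         - (10 * real n + 30 * real n^2 * of_bool (\<pi> i = j)) \<le> cell_count \<pi> n i j"
proof -
  let ?A = "real (corner_count \<pi> (i - 1) (j - 1))" and ?u = "of_bool (\<pi> i < j) :: real"
    and ?v = "real (value_count \<pi> (i - 1) j)" and ?e = "of_bool (\<pi> i = j) :: real"
  have "?A \<le> real n"
    using corner_count_le[of \<pi> "i - 1" "j - 1"] i by simp
  then have "cell_poly n i j ?A ?u ?v ?e - cell_square n i j ?A ?u ?v ?e - potential_step n i j ?A ?u ?v ?e
      \<ge> - (10 * real n + 30 * real n^2 * ?e)"
    using i j cell_count_as_cell_poly(3)[OF perm i j]
    by (intro cell_excess_lower_bound) auto
  moreover have "0 \<le> cell_square n i j ?A ?u ?v ?e"
    using i by (intro cell_square_nonneg) auto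
  ultimately show ?thesis
    using cell_count_as_cell_poly(1,2)[OF perm i j] by linarith
qed

lemma sum_row_potential_increments:
  assumes "1 \<le> n"
  shows "(\<Sum>j\<in>{1..n}. \<Sum>i\<in>{1..n}. row_potential_at \<pi> n i j - row_potential_at \<pi> n (i - 1) j) = 0"
proof (rule sum.neutral, rule ballI)
  fix j assume "j \<in> {1..n}"
  then have "row_potential_at \<pi> n n j = 0"
    using corner_count_full_left[OF perm] row_potential_full assms by (simp add: row_potential_at_def)
  moreover have "row_potential_at \<pi> n 0 j = 0"
    by (simp add: row_potential_at_def value_count_def)
  ultimately show "(\<Sum>i\<in>{1..n}. row_potential_at \<pi> n i j - row_potential_at \<pi> n (i - 1) j) = 0"
    using sum_diff_pred_telescope[of "\<lambda>i. row_potential_at \<pi> n i j" n] by simp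
qed

lemma sum_col_potential_increments:
  assumes "1 \<le> n"
  shows "(\<Sum>i\<in>{1..n}. \<Sum>j\<in>{1..n}. col_potential_at \<pi> n i j - col_potential_at \<pi> n i (j - 1))
           = real n^2 * (real n^2 - 1) / 72"
proof -
  have "(\<Sum>i\<in>{1..n}. \<Sum>j\<in>{1..n}. col_potential_at \<pi> n i j - col_potential_at \<pi> n i (j - 1))
      = (\<Sum>i\<in>{1..n}. col_potential_at \<pi> n i n - col_potential_at \<pi> n i 0)"
    by (intro sum.cong refl sum_diff_pred_telescope)
  also have "\<dots> = (\<Sum>i\<in>{1..n}. real i^2 * (real n - real i) / 6)"
    using corner_count_full_value[OF perm] col_potential_full col_potential_zero assms
    by (intro sum.cong refl) (simp add: col_potential_at_def corner_count_zero_value[OF perm])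
  also have "\<dots> = real n^2 * (real n^2 - 1) / 72"
    using sum_square_mult_gap[where m = n and x = "real n"]
    by (simp add: sum_divide_distrib[symmetric] field_simps power2_eq_square)
  finally show ?thesis .
qed

lemma sum_diagonal_error:
  "(\<Sum>i\<in>{1..n}. \<Sum>j\<in>{1..n}. 10 * real n + 30 * real n^2 * of_bool (\<pi> i = j)) = 40 * real n^3"
proof -
  have "(\<Sum>j\<in>{1..n}. of_bool (\<pi> i = j) :: real) = 1" if "i \<in> {1..n}" for i
    using permutes_in_image[OF perm] that by (simp add: sum.delta of_bool_def)
  then have "(\<Sum>i\<in>{1..n}. \<Sum>j\<in>{1..n}. 10 * real n + 30 * real n^2 * of_bool (\<pi> i = j))
      = (\<Sum>i\<in>{1..n}. 40 * real n^2)"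
    by (intro sum.cong refl)
      (simp add: sum.distrib sum_distrib_left[symmetric] power2_eq_square del: sum_of_bool_eq)
  then show ?thesis
    by (simp add: power2_eq_square power3_eq_cube)
qed

lemma sum_cell_count_lower_bound:
  assumes "1 \<le> n"
  shows "real n^2 * (real n^2 - 1) / 72 - 40 * real n^3 \<le> (\<Sum>i\<in>{1..n}. \<Sum>j\<in>{1..n}. cell_count \<pi> n i j)"
proof -
  define row where "row i j = row_potential_at \<pi> n i j - row_potential_at \<pi> n (i - 1) j" for i j
  define col where "col i j = col_potential_at \<pi> n i j - col_potential_at \<pi> n i (j - 1)" for i j
  define err where "err i j = 10 * real n + 30 * real n^2 * of_bool (\<pi> i = j)" for i j
  have "real n^2 * (real n^2 - 1) / 72 - 40 * real n^3
      = (\<Sum>i\<in>{1..n}. \<Sum>j\<in>{1..n}. row i j) + (\<Sum>i\<in>{1..n}. \<Sum>j\<in>{1..n}. col i j)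
        - (\<Sum>i\<in>{1..n}. \<Sum>j\<in>{1..n}. err i j)"
    using sum.swap[of row "{1..n}" "{1..n}"] sum_row_potential_increments
      sum_col_potential_increments sum_diagonal_error assms
    unfolding row_def col_def err_def by simp
  also have "\<dots> = (\<Sum>i\<in>{1..n}. \<Sum>j\<in>{1..n}. row i j + col i j - err i j)"
    by (simp only: sum.distrib sum_subtractf)
  also have "\<dots> \<le> (\<Sum>i\<in>{1..n}. \<Sum>j\<in>{1..n}. cell_count \<pi> n i j)"
    unfolding row_def col_def err_def
    by (intro sum_mono cell_count_ge_potential_increments) auto
  finally show ?thesis .
qed

end

lemma quartic_lower_bound:
  fixes x \<epsilon> :: real
  assumes x: "6 \<le> x" and \<epsilon>: "7680 \<le> \<epsilon> * x"
  shows "(1/3 - \<epsilon>) * (x * (x - 1) * (x - 2) * (x - 3) / 24) \<le> x^2 * (x^2 - 1) / 72 - 40 * x^3"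
proof -
  define C where "C = x * (x - 1) * (x - 2) * (x - 3) / 24"
  have "C / 3 \<le> x^2 * (x^2 - 1) / 72"
  proof -
    have "(x * (x - 1)) * ((x - 2) * (x - 3)) \<le> (x * (x - 1)) * (x * (x + 1))"
      using x by (intro mult_left_mono) (auto simp: algebra_simps)
    then show ?thesis
      unfolding C_def by (simp add: field_simps power2_eq_square)
  qed
  moreover have "40 * x^3 \<le> \<epsilon> * C"
  proof -
    have "(x / 2) * (x / 2) * (x / 2) \<le> (x - 1) * (x - 2) * (x - 3)"
      using x by (intro mult_mono) auto
    then have "x * ((x / 2) * (x / 2) * (x / 2)) \<le> x * ((x - 1) * (x - 2) * (x - 3))"
      using x by (intro mult_left_mono) auto
    then have "x^4 / 192 \<le> C"
      unfolding C_def by (simp add: power_def numeral_eq_Suc algebra_simps)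
    moreover have "0 \<le> \<epsilon> * x"
      using \<epsilon> by linarith
    then have "0 \<le> \<epsilon>"
      using x by (auto simp: zero_le_mult_iff)
    ultimately have "\<epsilon> * (x^4 / 192) \<le> \<epsilon> * C"
      by (intro mult_left_mono)
    moreover have "7680 * x^3 \<le> (\<epsilon> * x) * x^3"
      using \<epsilon> x by (intro mult_right_mono) auto
    then have "40 * x^3 \<le> \<epsilon> * (x^4 / 192)"
      by (simp add: power_def numeral_eq_Suc algebra_simps)
    ultimately show ?thesis by linarith
  qed
  ultimately show ?thesis
    unfolding C_def[symmetric] by (simp add: algebra_simps)
qed

theorem theorem5p1:
  fixes \<epsilon> :: real
  assumes "\<epsilon> > 0"
  shows "\<exists>n0. \<forall>n \<ge> n0. \<forall>\<pi>. \<pi> permutes {1..n} \<longrightarrow>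
           (\<Sum>\<tau>\<leftarrow>patterns8. induced_density \<tau> n \<pi>) \<ge> 1/3 - \<epsilon>"
proof (intro exI[of _ "max 6 (nat \<lceil>7680 / \<epsilon>\<rceil>)"] allI impI)
  fix n \<pi>
  assume n: "max 6 (nat \<lceil>7680 / \<epsilon>\<rceil>) \<le> n" and perm: "\<pi> permutes {1..n}"
  have x: "6 \<le> real n" and \<epsilon>: "7680 \<le> \<epsilon> * real n"
    using n assms by (auto simp: pos_divide_le_eq mult.commute dest!: le_nat_iff[THEN iffD1])
  have "(1/3 - \<epsilon>) * real (n choose 4) \<le> real n^2 * (real n^2 - 1) / 72 - 40 * real n^3"
    unfolding real_choose_four by (rule quartic_lower_bound[OF x \<epsilon>])
  also have "\<dots> \<le> (\<Sum>i\<in>{1..n}. \<Sum>j\<in>{1..n}. cell_count \<pi> n i j)"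
    using x by (intro sum_cell_count_lower_bound[OF perm]) simp
  also have "\<dots> = (\<Sum>\<tau>\<leftarrow>patterns8. induced_density \<tau> n \<pi>) * real (n choose 4)"
    using sum_list_induced_density[of patterns8 n \<pi>] sum_occurrences_patterns8_eq_sum_cell_count[OF perm] x
    by (simp add: patterns8_def)
  finally show "(\<Sum>\<tau>\<leftarrow>patterns8. induced_density \<tau> n \<pi>) \<ge> 1/3 - \<epsilon>"
    using x by simp
qed

end
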